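(* Let $r\geq3$ and $n>k_1\geq\cdots\geq k_r\geq t+2$. Let $\mathcal{F}_1\subseteq\Pi(n,k_1),\ldots,\mathcal{F}_r\subseteq\Pi(n,k_r)$ be nonempty, non-trivial and $r$-cross $t$-intersecting, with $s_i=t$ for all $i\in[r]$. Then: (i) for each $j\in[r]$, every $t$-cover of $\mathcal{G}_j$ is a $(t+1)$-cover of all but at most one of the families $\mathcal{F}_i$, $i\in[r]\setminus\{j\}$; (ii) $\tau_t(\mathcal{F}_i)=t$ and $\tau_t(\mathcal{G}_i)\geq t+2$ for all $i\in[r]$.
   Context: $[n]=\{1,\ldots,n\}$. A partition is a set of pairwise disjoint nonempty sets (blocks); $|P|$ is its number of blocks, $F\cap G$ the set of common blocks. $\Pi(n,k)$ is the set of partitions of $[n]$ into $k$ blocks. Families $\mathcal{F}_i\subseteq\Pi(n,k_i)$ are $r$-cross $t$-intersecting if $|F_1\cap\cdots\cap F_r|\geq t$ for all $F_i\in\mathcal{F}_i$; non-trivial if fewer than $t$ blocks belong to every member of every $\mathcal{F}_i$. $\mathcal{G}_i:=\{\bigcap_{j\neq i}F_j:F_j\in\mathcal{F}_j,\ j\neq i\}$ and $s_i:=\min\{|G|:G\in\mathcal{G}_i\}$. An $s$-cover of a family of partitions is a partition (not necessarily of $[n]$) sharing at least $s$ blocks with every member; $\tau_t$ is the minimal number of blocks of a $t$-cover. *)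

theory Defs
  imports Main "HOL-Library.Extended_Nat"
begin

definition is_partition :: "'a set set \<Rightarrow> bool" where
  "is_partition P \<longleftrightarrow> (\<forall>B\<in>P. B \<noteq> {}) \<and> (\<forall>B\<in>P. \<forall>C\<in>P. B \<noteq> C \<longrightarrow> B \<inter> C = {})"

definition Part :: "nat \<Rightarrow> nat \<Rightarrow> nat set set set" where
  "Part n k = {P. is_partition P \<and> \<Union>P = {1..n} \<and> card P = k}"

definition cross_intersecting :: "nat \<Rightarrow> nat \<Rightarrow> (nat \<Rightarrow> 'a set set set) \<Rightarrow> bool" where
  "cross_intersecting r t F \<longleftrightarrow>
     (\<forall>f. (\<forall>i\<in>{1..r}. f i \<in> F i) \<longrightarrow> t \<le> card (\<Inter>i\<in>{1..r}. f i))"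

definition non_trivial :: "nat \<Rightarrow> nat \<Rightarrow> (nat \<Rightarrow> 'a set set set) \<Rightarrow> bool" where
  "non_trivial r t F \<longleftrightarrow> card (\<Inter>i\<in>{1..r}. \<Inter>(F i)) < t"

definition Gfam :: "nat \<Rightarrow> (nat \<Rightarrow> 'a set set set) \<Rightarrow> nat \<Rightarrow> 'a set set set" where
  "Gfam r F i = {(\<Inter>j\<in>{1..r}-{i}. f j) | f. \<forall>j\<in>{1..r}-{i}. f j \<in> F j}"

definition s_param :: "nat \<Rightarrow> (nat \<Rightarrow> 'a set set set) \<Rightarrow> nat \<Rightarrow> nat" where
  "s_param r F i = Min (card ` Gfam r F i)"

definition is_cover :: "nat \<Rightarrow> 'a set set \<Rightarrow> 'a set set set \<Rightarrow> bool" where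
  "is_cover s C FF \<longleftrightarrow> is_partition C \<and> (\<forall>P\<in>FF. s \<le> card (C \<inter> P))"

text \<open>tau_t: minimal number of blocks of a t-cover (infinity if there is no finite t-cover).\<close>
definition tau :: "nat \<Rightarrow> 'a set set set \<Rightarrow> enat" where
  "tau t FF = (INF C \<in> {C. finite C \<and> is_cover t C FF}. enat (card C))"

end

theory Submission
  imports Defs
begin

(* For each i fix a member T_i = core i of G_i with t blocks. Cross-intersection forces T_i
   into every member of F_i, so T_i is a t-cover of F_i with t blocks.
   (i) Let a t-cover C of G_j meet members P_a of F_a and P_b of F_b (a, b, j distinct) in at
   most t blocks. Every member of G_j with a-th factor P_a then meets C exactly in C \<inter> P_a, so
   varying the other factors puts C \<inter> P_a into every member of every F_l, l \<notin> {j, a}; the same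
   holds for P_b, and C \<inter> P_a = C \<inter> P_b. Hence C \<inter> P_a \<subseteq> T_j, with equality by counting, and
   T_j lies in every member of every family, against non-triviality.
   (ii) A t-cover C of G_i contains T_i. Take a block A of T_i missed by some P in F_m. If
   |C| \<le> t + 1, every member of G_i avoiding A contains C - {A}, and exchanging a factor of T_i
   for P yields one, so |C| = t + 1. If A lies in all factors of T_m, the member of G_i built
   from P and the factors of T_m gives T_i \<subseteq> T_m, hence T_i = T_m \<subseteq> P, although A \<notin> P;
   otherwise exchanging a factor of T_i for a factor of T_m avoiding A gives C \<subseteq> T_i. *)

lemma is_partition_subset: "is_partition P \<Longrightarrow> Q \<subseteq> P \<Longrightarrow> is_partition Q"
  unfolding is_partition_def by blast

lemma PartD: "P \<in> Part n k \<Longrightarrow> is_partition P \<and> P \<subseteq> Pow {1..n}"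
  unfolding Part_def by auto

lemma subset_if_card_le_card_Int:
  assumes "finite B" "card B \<le> card (A \<inter> B)"
  shows "B \<subseteq> A"
  using card_seteq[OF assms(1) Int_lower2 assms(2)] by blast

lemma exists_other_index: "2 \<le> (r::nat) \<Longrightarrow> \<exists>j. j \<in> {1..r}-{i}"
  by (rule exI[of _ "if i = 1 then 2 else 1"]) auto

lemma Inter_mem_Gfam:
  "\<forall>j\<in>{1..r}-{i}. f j \<in> F j \<Longrightarrow> (\<Inter>j\<in>{1..r}-{i}. f j) \<in> Gfam r F i"
  unfolding Gfam_def by blast

lemma GfamE:
  assumes "G \<in> Gfam r F i"
  obtains f where "\<forall>j\<in>{1..r}-{i}. f j \<in> F j" "G = (\<Inter>j\<in>{1..r}-{i}. f j)"
  using assms unfolding Gfam_def by blast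

lemma Gfam_nonempty: "\<forall>j\<in>{1..r}-{i}. F j \<noteq> {} \<Longrightarrow> Gfam r F i \<noteq> {}"
  using Inter_mem_Gfam[of r i "\<lambda>j. SOME P. P \<in> F j" F] by (auto simp: some_in_eq)

lemma Gfam_subset_member:
  assumes "G \<in> Gfam r F i" "j \<in> {1..r}-{i}"
  shows "\<exists>P\<in>F j. G \<subseteq> P"
  using assms by (elim GfamE) blast

lemma s_param_attained:
  assumes "finite (card ` Gfam r F i)" "\<forall>j\<in>{1..r}-{i}. F j \<noteq> {}"
  shows "\<exists>G\<in>Gfam r F i. card G = s_param r F i"
proof -
  have "card ` Gfam r F i \<noteq> {}"
    using Gfam_nonempty assms(2) by blast
  then have "s_param r F i \<in> card ` Gfam r F i"
    unfolding s_param_def by (rule Min_in[OF assms(1)])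
  then show ?thesis by (metis imageE)
qed

lemma cross_intersecting_Gfam:
  assumes "cross_intersecting r t F" "i \<in> {1..r}" "P \<in> F i" "G \<in> Gfam r F i"
  shows "t \<le> card (P \<inter> G)"
proof -
  obtain f where f: "\<forall>j\<in>{1..r}-{i}. f j \<in> F j" and G: "G = (\<Inter>j\<in>{1..r}-{i}. f j)"
    using assms(4) by (rule GfamE)
  have "\<forall>j\<in>{1..r}. (f(i := P)) j \<in> F j"
    using f assms(3) by auto
  then have "t \<le> card (\<Inter>j\<in>{1..r}. (f(i := P)) j)"
    using assms(1) unfolding cross_intersecting_def by blast
  also have "(\<Inter>j\<in>{1..r}. (f(i := P)) j) = P \<inter> G"
    using assms(2) G by auto
  finally show ?thesis .
qed

lemma tau_le_card: "finite C \<Longrightarrow> is_cover t C FF \<Longrightarrow> tau t FF \<le> enat (card C)"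
  unfolding tau_def by (rule INF_lower) simp

lemma le_tau: "(\<And>C. finite C \<Longrightarrow> is_cover t C FF \<Longrightarrow> m \<le> card C) \<Longrightarrow> enat m \<le> tau t FF"
  unfolding tau_def by (rule INF_greatest) auto

lemma card_le_tau:
  assumes "FF \<noteq> {}"
  shows "enat t \<le> tau t FF"
proof (rule le_tau)
  fix C assume "finite C" "is_cover t C FF"
  moreover obtain P where "P \<in> FF" using assms by blast
  ultimately have "t \<le> card (C \<inter> P)" "card (C \<inter> P) \<le> card C"
    unfolding is_cover_def by (auto intro: card_mono)
  then show "t \<le> card C" by linarith
qed

(* Only s_i \<le> t is assumed: cross-intersection already gives every member of G_i at least t
   blocks. *)
locale minimal_cross_intersecting =
  fixes r t :: nat and F :: "nat \<Rightarrow> 'a set set set"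
  assumes two_le_r: "2 \<le> r"
    and finite_partition: "i \<in> {1..r} \<Longrightarrow> P \<in> F i \<Longrightarrow> finite P \<and> is_partition P"
    and cross: "cross_intersecting r t F"
    and non_trivial: "non_trivial r t F"
    and small_member: "i \<in> {1..r} \<Longrightarrow> \<exists>G\<in>Gfam r F i. card G \<le> t"
begin

definition factor :: "nat \<Rightarrow> nat \<Rightarrow> 'a set set" where
  "factor i = (SOME f. (\<forall>j\<in>{1..r}-{i}. f j \<in> F j) \<and> card (\<Inter>j\<in>{1..r}-{i}. f j) \<le> t)"

definition core :: "nat \<Rightarrow> 'a set set" where
  "core i = (\<Inter>j\<in>{1..r}-{i}. factor i j)"

lemma factor_spec:
  assumes "i \<in> {1..r}"
  shows "(\<forall>j\<in>{1..r}-{i}. factor i j \<in> F j) \<and> card (core i) \<le> t"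
proof -
  obtain G where "G \<in> Gfam r F i" "card G \<le> t"
    using small_member assms by blast
  then have "\<exists>f. (\<forall>j\<in>{1..r}-{i}. f j \<in> F j) \<and> card (\<Inter>j\<in>{1..r}-{i}. f j) \<le> t"
    by (metis GfamE)
  then show ?thesis
    unfolding factor_def core_def by (rule someI_ex)
qed

lemma factor_mem: "i \<in> {1..r} \<Longrightarrow> j \<in> {1..r}-{i} \<Longrightarrow> factor i j \<in> F j"
  using factor_spec by blast

lemma F_nonempty:
  assumes "i \<in> {1..r}"
  shows "F i \<noteq> {}"
proof -
  obtain j where "j \<in> {1..r}-{i}"
    using exists_other_index two_le_r by blast
  then show ?thesis
    using factor_mem assms by blast
qed

lemma Gfam_finite_partition:
  assumes "i \<in> {1..r}" "G \<in> Gfam r F i"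
  shows "finite G \<and> is_partition G"
proof -
  obtain j where "j \<in> {1..r}-{i}"
    using exists_other_index two_le_r by blast
  then obtain P where "P \<in> F j" "G \<subseteq> P"
    using Gfam_subset_member assms(2) by blast
  then show ?thesis
    using finite_partition \<open>j \<in> {1..r}-{i}\<close> by (meson DiffD1 finite_subset is_partition_subset)
qed

lemma core_in_Gfam: "i \<in> {1..r} \<Longrightarrow> core i \<in> Gfam r F i"
  unfolding core_def using factor_spec by (blast intro: Inter_mem_Gfam)

lemma finite_core: "i \<in> {1..r} \<Longrightarrow> finite (core i)"
  using Gfam_finite_partition core_in_Gfam by blast

lemma card_core:
  assumes "i \<in> {1..r}"
  shows "card (core i) = t"
proof -
  obtain P where "P \<in> F i"
    using F_nonempty assms by blast
  then have "t \<le> card (P \<inter> core i)"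
    using cross_intersecting_Gfam[OF cross assms _ core_in_Gfam[OF assms]] by blast
  also have "\<dots> \<le> card (core i)"
    using finite_core assms by (simp add: card_mono)
  finally show ?thesis
    using factor_spec assms by (simp add: le_antisym)
qed

lemma core_subset: "i \<in> {1..r} \<Longrightarrow> P \<in> F i \<Longrightarrow> core i \<subseteq> P"
  using cross_intersecting_Gfam[OF cross _ _ core_in_Gfam] card_core finite_core
  by (metis subset_if_card_le_card_Int)

lemma core_not_common:
  assumes "i \<in> {1..r}"
  shows "\<exists>m\<in>{1..r}. \<exists>P\<in>F m. \<not> core i \<subseteq> P"
proof (rule ccontr)
  assume "\<not> ?thesis"
  then have core_common: "core i \<subseteq> (\<Inter>m\<in>{1..r}. \<Inter>(F m))" by blast
  obtain P where "P \<in> F i"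
    using F_nonempty assms by blast
  then have "finite (\<Inter>m\<in>{1..r}. \<Inter>(F m))"
    using finite_partition assms by (meson INT_lower Inter_lower finite_subset)
  then have "t \<le> card (\<Inter>m\<in>{1..r}. \<Inter>(F m))"
    using core_common card_mono card_core assms by metis
  then show False
    using non_trivial unfolding non_trivial_def by simp
qed

lemma tau_F_eq: "i \<in> {1..r} \<Longrightarrow> tau t (F i) = enat t"
proof -
  assume i: "i \<in> {1..r}"
  have "is_cover t (core i) (F i)"
    unfolding is_cover_def
    using core_subset card_core Gfam_finite_partition core_in_Gfam i
    by (simp add: inf.absorb1)
  then have "tau t (F i) \<le> enat t"
    using tau_le_card finite_core card_core i by metis
  moreover have "enat t \<le> tau t (F i)"
    using card_le_tau F_nonempty i by blast
  ultimately show ?thesis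
    by (rule antisym)
qed

lemma cover_Int_ge:
  assumes "is_cover t C (Gfam r F j)" "\<forall>l\<in>{1..r}-{j}. g l \<in> F l"
  shows "t \<le> card (C \<inter> (\<Inter>l\<in>{1..r}-{j}. g l))"
  using assms Inter_mem_Gfam unfolding is_cover_def by blast

lemma cover_Int_eq:
  assumes "is_cover t C (Gfam r F j)" "\<forall>l\<in>{1..r}-{j}. g l \<in> F l"
    and "a \<in> {1..r}-{j}" "card (C \<inter> g a) \<le> t"
  shows "C \<inter> (\<Inter>l\<in>{1..r}-{j}. g l) = C \<inter> g a"
proof (rule card_seteq)
  show "finite (C \<inter> g a)"
    using finite_partition assms(2,3) by blast
  show "C \<inter> (\<Inter>l\<in>{1..r}-{j}. g l) \<subseteq> C \<inter> g a"
    using assms(3) by blast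
  show "card (C \<inter> g a) \<le> card (C \<inter> (\<Inter>l\<in>{1..r}-{j}. g l))"
    using cover_Int_ge[OF assms(1,2)] assms(4) by linarith
qed

lemma small_Int_subset_member:
  assumes "j \<in> {1..r}" "is_cover t C (Gfam r F j)"
    and "a \<in> {1..r}-{j}" "P \<in> F a" "card (C \<inter> P) \<le> t"
    and "l \<in> {1..r}-{j,a}" "Q \<in> F l"
  shows "C \<inter> P \<subseteq> Q"
proof -
  let ?g = "(factor j)(a := P, l := Q)"
  have g: "\<forall>l'\<in>{1..r}-{j}. ?g l' \<in> F l'"
    using factor_mem assms by auto
  have "C \<inter> P = C \<inter> (\<Inter>l'\<in>{1..r}-{j}. ?g l')"
    using cover_Int_eq[OF assms(2) g assms(3)] assms(5,6) by auto
  also have "\<dots> \<subseteq> Q"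
    using assms(6) by auto
  finally show ?thesis .
qed

lemma at_most_one_uncovered:
  assumes j: "j \<in> {1..r}" and C: "is_cover t C (Gfam r F j)"
  shows "card {i\<in>{1..r}-{j}. \<not> is_cover (t+1) C (F i)} \<le> 1"
proof -
  have False
    if a: "a \<in> {1..r}-{j}" and b: "b \<in> {1..r}-{j}" and "a \<noteq> b"
      and uncovered: "\<not> is_cover (t+1) C (F a)" "\<not> is_cover (t+1) C (F b)" for a b
  proof -
    have "is_partition C"
      using C unfolding is_cover_def by blast
    then obtain Pa Pb where Pa: "Pa \<in> F a" "card (C \<inter> Pa) \<le> t"
      and Pb: "Pb \<in> F b" "card (C \<inter> Pb) \<le> t"
      using uncovered unfolding is_cover_def by force
    have "C \<inter> Pa = C \<inter> Pb"
      using small_Int_subset_member[OF j C a Pa _ Pb(1)]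
        small_Int_subset_member[OF j C b Pb _ Pa(1)] a b \<open>a \<noteq> b\<close>
      by blast
    then have below: "C \<inter> Pa \<subseteq> Q" if "l \<in> {1..r}-{j}" "Q \<in> F l" for l Q
      using small_Int_subset_member[OF j C a Pa _ that(2)]
        small_Int_subset_member[OF j C b Pb _ that(2)] that(1) \<open>a \<noteq> b\<close>
      by (cases "l = a") auto
    have "C \<inter> Pa \<subseteq> core j"
      unfolding core_def using below factor_mem j by blast
    moreover have "t \<le> card (C \<inter> Pa)"
      using cover_Int_ge[OF C, of "(factor j)(a := Pa)"] cover_Int_eq[OF C _ a, of "(factor j)(a := Pa)"]
        factor_mem[OF j] Pa by auto
    ultimately have "C \<inter> Pa = core j"
      using card_seteq finite_core card_core j by metis
    then have "\<forall>l\<in>{1..r}. \<forall>Q\<in>F l. core j \<subseteq> Q"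
      using below core_subset j by blast
    then show False
      using core_not_common j by blast
  qed
  then have "\<forall>a\<in>{i\<in>{1..r}-{j}. \<not> is_cover (t+1) C (F i)}.
      \<forall>b\<in>{i\<in>{1..r}-{j}. \<not> is_cover (t+1) C (F i)}. a = b"
    by blast
  then show ?thesis
    using card_le_Suc0_iff_eq[of "{i\<in>{1..r}-{j}. \<not> is_cover (t+1) C (F i)}"] by simp
qed

lemma small_cover_minus_subset:
  assumes C: "is_cover t C (Gfam r F i)" "finite C" "card C \<le> t + 1"
    and g: "\<forall>l\<in>{1..r}-{i}. g l \<in> F l"
    and A: "A \<in> C" "A \<notin> (\<Inter>l\<in>{1..r}-{i}. g l)"
  shows "C - {A} \<subseteq> (\<Inter>l\<in>{1..r}-{i}. g l)" and "card C = t + 1"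
proof -
  have t_le: "t \<le> card (C \<inter> (\<Inter>l\<in>{1..r}-{i}. g l))"
    using cover_Int_ge[OF C(1) g] .
  have eq: "C \<inter> (\<Inter>l\<in>{1..r}-{i}. g l) = C - {A}"
  proof (rule card_seteq)
    show "card (C - {A}) \<le> card (C \<inter> (\<Inter>l\<in>{1..r}-{i}. g l))"
      using t_le C(2,3) A(1) by simp
  qed (use A C in auto)
  then show "C - {A} \<subseteq> (\<Inter>l\<in>{1..r}-{i}. g l)"
    by blast
  have "card (C - {A}) = card C - 1" "card C \<noteq> 0"
    using A(1) C(2) by auto
  then show "card C = t + 1"
    using t_le C(3) unfolding eq by linarith
qed

lemma core_subset_cover:
  assumes "i \<in> {1..r}" "is_cover t C (Gfam r F i)"
  shows "core i \<subseteq> C"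
proof -
  have "t \<le> card (C \<inter> core i)"
    using assms core_in_Gfam unfolding is_cover_def by blast
  then show ?thesis
    using finite_core card_core assms(1) by (metis subset_if_card_le_card_Int)
qed

lemma small_cover_exchange:
  assumes C: "is_cover t C (Gfam r F i)" "finite C" "card C \<le> t + 1" "A \<in> C"
    and Q: "j \<in> {1..r}-{i}" "Q \<in> F j" "A \<notin> Q"
    and g: "\<forall>l\<in>{1..r}-{i,j}. g l \<in> F l"
    and l: "l \<in> {1..r}-{i,j}"
  shows "C - {A} \<subseteq> g l"
proof -
  have "\<forall>l\<in>{1..r}-{i}. (g(j := Q)) l \<in> F l"
    using g Q by auto
  moreover have "A \<notin> (\<Inter>l\<in>{1..r}-{i}. (g(j := Q)) l)"
    using Q by auto
  ultimately have "C - {A} \<subseteq> (\<Inter>l\<in>{1..r}-{i}. (g(j := Q)) l)"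
    using small_cover_minus_subset(1)[OF C(1-3) _ C(4)] by blast
  then show ?thesis
    using l by force
qed

lemma card_cover_Gfam_ge:
  assumes i: "i \<in> {1..r}" and C: "is_cover t C (Gfam r F i)" "finite C"
  shows "t + 2 \<le> card C"
proof (rule ccontr)
  assume "\<not> ?thesis"
  then have small: "card C \<le> t + 1" by simp
  have core_C: "core i \<subseteq> C"
    using core_subset_cover i C(1) .
  obtain m P A where m: "m \<in> {1..r}" and P: "P \<in> F m" and A: "A \<in> core i" "A \<notin> P"
    using core_not_common i by blast
  have "m \<noteq> i"
    using core_subset i P A by blast
  note exchange = small_cover_exchange[OF C small, of A]
  have "\<forall>l\<in>{1..r}-{i}. ((factor i)(m := P)) l \<in> F l"
    using factor_mem i m P by auto
  moreover have "A \<notin> (\<Inter>l\<in>{1..r}-{i}. ((factor i)(m := P)) l)"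
    using m \<open>m \<noteq> i\<close> A by auto
  ultimately have card_C: "card C = t + 1"
    using small_cover_minus_subset(2)[OF C small] A core_C by blast
  have C_minus: "C - {A} \<subseteq> factor i l" if "l \<in> {1..r}-{i,m}" for l
    using exchange[of m P "factor i" l] that A core_C m P \<open>m \<noteq> i\<close> factor_mem[OF i] by blast
  show False
  proof (cases "\<forall>l\<in>{1..r}-{m}. A \<in> factor m l")
    case True
    have "C - {A} \<subseteq> factor m l" if "l \<in> {1..r}-{i,m}" for l
      using exchange[of m P "factor m" l] that A core_C m P \<open>m \<noteq> i\<close> factor_mem[OF m] by blast
    then have "core i \<subseteq> factor m l" if "l \<in> {1..r}-{m}" for l
      using that True core_C core_subset[OF i] factor_mem[OF m] by (cases "l = i") blast+
    then have "core i \<subseteq> core m"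
      unfolding core_def[of m] by blast
    then have "core i = core m"
      using card_seteq[OF finite_core[OF m]] card_core[OF i] card_core[OF m] by simp
    then show False
      using core_subset[OF m P] A by blast
  next
    case False
    then obtain q where q: "q \<in> {1..r}-{m}" "A \<notin> factor m q" by blast
    have "q \<noteq> i"
      using q core_subset[OF i] factor_mem[OF m] A by blast
    have "C - {A} \<subseteq> factor i m"
      using exchange[of q "factor m q" "factor i" m] q \<open>q \<noteq> i\<close> m \<open>m \<noteq> i\<close> A core_C
        factor_mem[OF i] factor_mem[OF m] by blast
    then have "C - {A} \<subseteq> factor i l" if "l \<in> {1..r}-{i}" for l
      using C_minus that by (cases "l = m") auto
    then have "C \<subseteq> core i"
      using A(1) unfolding core_def by blast
    then have "card C \<le> t"
      using card_mono[OF finite_core[OF i]] card_core[OF i] by metis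
    then show False
      using card_C by simp
  qed
qed

lemma tau_Gfam_ge: "i \<in> {1..r} \<Longrightarrow> enat (t + 2) \<le> tau t (Gfam r F i)"
  using card_cover_Gfam_ge by (blast intro: le_tau)

end

theorem mainTheorem15:
  fixes r n t :: nat and k :: "nat \<Rightarrow> nat" and F :: "nat \<Rightarrow> nat set set set"
  assumes "3 \<le> r"
    and "k 1 < n"
    and "\<forall>i\<in>{1..<r}. k (Suc i) \<le> k i"
    and "t + 2 \<le> k r"
    and "\<forall>i\<in>{1..r}. F i \<subseteq> Part n (k i) \<and> F i \<noteq> {}"
    and "non_trivial r t F"
    and "cross_intersecting r t F"
    and "\<forall>i\<in>{1..r}. s_param r F i = t"
  shows "(\<forall>j\<in>{1..r}. \<forall>C. is_cover t C (Gfam r F j) \<longrightarrow>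
            card {i\<in>{1..r}-{j}. \<not> is_cover (t+1) C (F i)} \<le> 1)
       \<and> (\<forall>i\<in>{1..r}. tau t (F i) = enat t \<and> enat (t + 2) \<le> tau t (Gfam r F i))"
proof -
  have members: "is_partition P \<and> P \<subseteq> Pow {1..n}" if "i \<in> {1..r}" "P \<in> F i" for i P
    using assms(5) that PartD by blast
  have small: "\<exists>G\<in>Gfam r F i. card G \<le> t" if i: "i \<in> {1..r}" for i
  proof -
    obtain j where "j \<in> {1..r}-{i}"
      using exists_other_index[of r i] assms(1) by force
    then have "Gfam r F i \<subseteq> Pow (Pow {1..n})"
      using Gfam_subset_member members by blast
    then have "finite (card ` Gfam r F i)"
      by (meson finite_Pow_iff finite_atLeastAtMost finite_imageI finite_subset)
    then show ?thesis
      using s_param_attained assms(5,8) i by (metis DiffD1 order_refl)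
  qed
  have finite_partition: "finite P \<and> is_partition P" if "i \<in> {1..r}" "P \<in> F i" for i P
    using members[OF that] by (meson finite_Pow_iff finite_atLeastAtMost finite_subset)
  interpret minimal_cross_intersecting r t F
    by unfold_locales (use assms(1,6,7) small finite_partition in auto)
  show ?thesis
    using at_most_one_uncovered tau_F_eq tau_Gfam_ge by blast
qed

end
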